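(* Consider an instance of VCPNEW on $G=(V,E)$ with data $c,q^1,q^2$, and let MWVCP-EQV be the minimum weight vertex cover instance on $G$ with vertex weights $c'_i=c_i+\sum_{j:(i,j)\in E}(q^2_{ij}-q^1_{ij})$. For a vertex cover $P$ write $\phi(P)=\sum_{i\in P}c'_i$, let $P^o$ be an optimal vertex cover for MWVCP-EQV with $\phi(P^o)>0$, and set $\delta=\frac{\sum_{(i,j)\in E}(2q^1_{ij}-q^2_{ij})}{\phi(P^o)}$. Suppose $\sum_{(i,j)\in E}(2q^1_{ij}-q^2_{ij})\ge0$ and $c'_i\ge0$ for all $i\in V$. If $P^*$ is an $\epsilon$-approximate vertex cover for MWVCP-EQV, then $P^*$ is a $\frac{\epsilon+\delta}{1+\delta}$-approximate vertex cover for VCPNEW.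
   Context: A vertex cover of $G$ is a set $P\subseteq V$ containing at least one endpoint of every edge. For $P\subseteq V$, $E_1(P)$ is the set of edges with exactly one endpoint in $P$ and $E_2(P)$ the set of edges with both endpoints in $P$. VCPNEW is to find a vertex cover $P$ minimizing $f(P)=\sum_{i\in P}c_i+\sum_{(i,j)\in E_1(P)}q^1_{ij}+\sum_{(i,j)\in E_2(P)}q^2_{ij}$. A feasible solution $P^*$ of a minimization problem with optimal value $OPT$ is $\epsilon$-approximate if its objective value is at most $\epsilon\cdot OPT$. *)

theory Defs
  imports Complex_Main
begin

(* Simple graph G = (V, E): V finite vertex set, E a set of unordered edges {i,j},
   each a 2-element subset of V. Edge data q1, q2 are indexed by edges. *)

definition is_vc :: "'a set \<Rightarrow> 'a set set \<Rightarrow> 'a set \<Rightarrow> bool" where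
  "is_vc V E P \<longleftrightarrow> P \<subseteq> V \<and> (\<forall>e\<in>E. e \<inter> P \<noteq> {})"

definition vcs :: "'a set \<Rightarrow> 'a set set \<Rightarrow> 'a set set" where
  "vcs V E = {P. is_vc V E P}"

definition E1 :: "'a set set \<Rightarrow> 'a set \<Rightarrow> 'a set set" where
  "E1 E P = {e\<in>E. card (e \<inter> P) = 1}"

definition E2 :: "'a set set \<Rightarrow> 'a set \<Rightarrow> 'a set set" where
  "E2 E P = {e\<in>E. e \<subseteq> P}"

definition vcp_obj :: "'a set set \<Rightarrow> ('a \<Rightarrow> real) \<Rightarrow> ('a set \<Rightarrow> real) \<Rightarrow> ('a set \<Rightarrow> real)
    \<Rightarrow> 'a set \<Rightarrow> real" where
  "vcp_obj E c q1 q2 P = (\<Sum>i\<in>P. c i) + (\<Sum>e\<in>E1 E P. q1 e) + (\<Sum>e\<in>E2 E P. q2 e)"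

definition eqv_weight :: "'a set set \<Rightarrow> ('a \<Rightarrow> real) \<Rightarrow> ('a set \<Rightarrow> real) \<Rightarrow> ('a set \<Rightarrow> real)
    \<Rightarrow> 'a \<Rightarrow> real" where
  "eqv_weight E c q1 q2 i = c i + (\<Sum>e\<in>{e\<in>E. i \<in> e}. q2 e - q1 e)"

definition eqv_obj :: "'a set set \<Rightarrow> ('a \<Rightarrow> real) \<Rightarrow> ('a set \<Rightarrow> real) \<Rightarrow> ('a set \<Rightarrow> real)
    \<Rightarrow> 'a set \<Rightarrow> real" where
  "eqv_obj E c q1 q2 P = (\<Sum>i\<in>P. eqv_weight E c q1 q2 i)"

definition eps_approx :: "'b set \<Rightarrow> ('b \<Rightarrow> real) \<Rightarrow> real \<Rightarrow> 'b \<Rightarrow> bool" where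
  "eps_approx S obj eps P \<longleftrightarrow> P \<in> S \<and> obj P \<le> eps * Min (obj ` S)"

end

theory Submission
  imports Defs
begin

text \<open>Counting edges by their endpoints, \<open>\<phi>(P) = \<Sum>i\<in>P. c i + \<Sum>e\<in>E. |e \<inter> P| (q2 e - q1 e)\<close>.
  For a vertex cover every edge meets \<open>P\<close> in one or two endpoints, and in both cases its
  contribution to \<open>f(P)\<close> exceeds its contribution to \<open>\<phi>(P)\<close> by \<open>2 q1 e - q2 e\<close>. Hence
  \<open>f = \<phi> + K\<close> on vertex covers, with the constant \<open>K = \<Sum>e\<in>E. 2 q1 e - q2 e \<ge> 0\<close>: both
  problems have the same optimal covers, \<open>OPT_f = \<phi>(Po) + K\<close>, and
  \<open>f(P*) \<le> \<epsilon> \<phi>(Po) + K = (\<epsilon> + \<delta>) / (1 + \<delta>) \<cdot> OPT_f\<close>.\<close>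

lemma finite_vcs: "finite V \<Longrightarrow> finite (vcs V E)"
  by (rule finite_subset[of _ "Pow V"]) (auto simp: vcs_def is_vc_def)

lemma Min_image_eq_minimizer:
  fixes obj :: "'b \<Rightarrow> 'c::linorder"
  assumes "finite S" and "x \<in> S" and "\<forall>y\<in>S. obj x \<le> obj y"
  shows "Min (obj ` S) = obj x"
  using assms by (intro Min_eqI) auto

lemma eps_approx_shift_objective:
  assumes fin: "finite S" and opt_in: "Po \<in> S" and opt: "\<forall>Q\<in>S. obj Po \<le> obj Q"
    and pos: "obj Po > 0" and K_nonneg: "K \<ge> 0"
    and shift: "\<forall>Q\<in>S. obj' Q = obj Q + K"
    and approx: "eps_approx S obj eps P"
  shows "eps_approx S obj' ((eps + K / obj Po) / (1 + K / obj Po)) P"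
proof -
  have P_in: "P \<in> S" and P_le: "obj P \<le> eps * obj Po"
    using approx Min_image_eq_minimizer[OF fin opt_in opt] by (auto simp: eps_approx_def)
  have "Min (obj' ` S) = obj Po + K"
    using Min_image_eq_minimizer[OF fin opt_in, of obj'] opt_in opt shift by simp
  moreover have "obj' P \<le> (eps + K / obj Po) / (1 + K / obj Po) * (obj Po + K)"
  proof -
    have "1 + K / obj Po = (obj Po + K) / obj Po" and "eps + K / obj Po = (eps * obj Po + K) / obj Po"
      using pos by (simp_all add: field_simps)
    then have "(eps + K / obj Po) / (1 + K / obj Po) * (obj Po + K) = eps * obj Po + K"
      using pos K_nonneg by simp
    then show ?thesis using shift P_in P_le by simp
  qed
  ultimately show ?thesis using P_in by (simp add: eps_approx_def)
qed

lemma eqv_obj_eq_edge_sum: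
  assumes "finite P" and "finite E"
  shows "eqv_obj E c q1 q2 P
    = (\<Sum>i\<in>P. c i) + (\<Sum>e\<in>E. real (card (e \<inter> P)) * (q2 e - q1 e))"
proof -
  have "(\<Sum>i\<in>P. \<Sum>e\<in>{e\<in>E. i \<in> e}. q2 e - q1 e) = (\<Sum>e\<in>E. \<Sum>i\<in>{i\<in>P. i \<in> e}. q2 e - q1 e)"
    using sum.swap_restrict[OF assms, of "\<lambda>_ e. q2 e - q1 e" "\<lambda>i e. i \<in> e"] by simp
  also have "\<dots> = (\<Sum>e\<in>E. real (card (e \<inter> P)) * (q2 e - q1 e))"
    by (intro sum.cong) (auto simp: Int_def conj_commute)
  finally show ?thesis
    unfolding eqv_obj_def eqv_weight_def by (simp add: sum.distrib)
qed

lemma card_edge_inter_cover: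
  assumes "card e = 2" and "e \<inter> P \<noteq> {}"
  shows "card (e \<inter> P) = 1 \<and> \<not> e \<subseteq> P \<or> card (e \<inter> P) = 2 \<and> e \<subseteq> P"
proof -
  have fin: "finite e" using assms(1) card.infinite by fastforce
  have "card (e \<inter> P) \<ge> 1" using assms(2) fin by (simp add: Suc_leI card_gt_0_iff)
  moreover have "card (e \<inter> P) \<le> 2" using card_mono[OF fin, of "e \<inter> P"] assms(1) by auto
  moreover have "e \<subseteq> P \<longleftrightarrow> card (e \<inter> P) = 2"
    using card_subset_eq[OF fin, of "e \<inter> P"] assms(1) by (auto simp: Int_absorb2)
  ultimately show ?thesis by auto
qed

lemma vcp_obj_eq_eqv_obj_plus_const:
  assumes fin: "finite V" and edges: "\<forall>e\<in>E. e \<subseteq> V \<and> card e = 2"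
    and vc: "is_vc V E P"
  shows "vcp_obj E c q1 q2 P = eqv_obj E c q1 q2 P + (\<Sum>e\<in>E. 2 * q1 e - q2 e)"
proof -
  have finE: "finite E" using edges fin by (meson PowI finite_Pow_iff finite_subset subsetI)
  have finP: "finite P" using vc fin by (auto simp: is_vc_def intro: finite_subset)
  have per_edge: "(if card (e \<inter> P) = 1 then q1 e else 0) + (if e \<subseteq> P then q2 e else 0)
      = real (card (e \<inter> P)) * (q2 e - q1 e) + (2 * q1 e - q2 e)" if "e \<in> E" for e
    using card_edge_inter_cover[of e P] edges vc that by (auto simp: is_vc_def)
  have "(\<Sum>e\<in>E1 E P. q1 e) + (\<Sum>e\<in>E2 E P. q2 e)
      = (\<Sum>e\<in>E. (if card (e \<inter> P) = 1 then q1 e else 0) + (if e \<subseteq> P then q2 e else 0))"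
    using finE by (simp add: E1_def E2_def sum.inter_filter sum.distrib)
  also have "\<dots> = (\<Sum>e\<in>E. real (card (e \<inter> P)) * (q2 e - q1 e)) + (\<Sum>e\<in>E. 2 * q1 e - q2 e)"
    using per_edge by (simp add: sum.distrib)
  finally show ?thesis
    unfolding vcp_obj_def eqv_obj_eq_edge_sum[OF finP finE] by simp
qed

theorem lemma4:
  fixes V :: "'a set" and E :: "'a set set"
    and c :: "'a \<Rightarrow> real" and q1 q2 :: "'a set \<Rightarrow> real"
    and Po Pstar :: "'a set" and eps :: real
  assumes "finite V"
    and "\<forall>e\<in>E. e \<subseteq> V \<and> card e = 2"
    and "is_vc V E Po"
    and "\<forall>Q. is_vc V E Q \<longrightarrow> eqv_obj E c q1 q2 Po \<le> eqv_obj E c q1 q2 Q"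
    and "eqv_obj E c q1 q2 Po > 0"
    and "(\<Sum>e\<in>E. 2 * q1 e - q2 e) \<ge> 0"
    and "\<forall>i\<in>V. eqv_weight E c q1 q2 i \<ge> 0"
    and "eps_approx (vcs V E) (eqv_obj E c q1 q2) eps Pstar"
  shows "let \<delta> = (\<Sum>e\<in>E. 2 * q1 e - q2 e) / eqv_obj E c q1 q2 Po
         in eps_approx (vcs V E) (vcp_obj E c q1 q2) ((eps + \<delta>) / (1 + \<delta>)) Pstar"
  unfolding Let_def
proof (rule eps_approx_shift_objective[OF finite_vcs[OF assms(1)]])
  show "Po \<in> vcs V E" using assms(3) by (simp add: vcs_def)
  show "\<forall>Q\<in>vcs V E. eqv_obj E c q1 q2 Po \<le> eqv_obj E c q1 q2 Q"
    using assms(4) by (simp add: vcs_def)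
  show "\<forall>Q\<in>vcs V E. vcp_obj E c q1 q2 Q = eqv_obj E c q1 q2 Q + (\<Sum>e\<in>E. 2 * q1 e - q2 e)"
    using vcp_obj_eq_eqv_obj_plus_const[OF assms(1,2)] by (simp add: vcs_def)
qed (use assms(5,6,8) in auto)

end
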